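(* Let $4\le k\le\infty$ and let $\Gamma=(V,E)$ be a graph of girth $\geq 4$. Let $\widetilde\Gamma$ be the graph whose vertices are the pairs $(v,\sigma)$ with $v\in V$, $\sigma\in V\cup E$ and $v\subset\sigma$ (i.e. $\sigma=v$ or $\sigma$ is an edge containing $v$), where $(v,\sigma)$ and $(v',\sigma')$ are adjacent if either $v=v'$, or $v,v'$ are adjacent in $\Gamma$ and $\sigma\in\{v,vv'\}$, $\sigma'\in\{v',vv'\}$. Then the flag complex spanned on $\widetilde\Gamma$ is $k$-large if and only if $\Gamma$ has girth $\geq k$.
   Context: The flag complex spanned on a graph has a simplex for each finite clique. A cycle is a subcomplex that is a subdivision of the circle; it is full if every simplex spanned by its vertices lies in it. A flag complex is $k$-large if it has no full cycle of length $<k$. *)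

theory Defs
  imports Main "HOL-Library.Extended_Nat"
begin

definition graph :: "'a set \<Rightarrow> ('a \<Rightarrow> 'a \<Rightarrow> bool) \<Rightarrow> bool" where
  "graph V E \<longleftrightarrow> (\<forall>u v. E u v \<longrightarrow> u \<in> V \<and> v \<in> V \<and> u \<noteq> v \<and> E v u)"

definition is_cycle :: "'a set \<Rightarrow> ('a \<Rightarrow> 'a \<Rightarrow> bool) \<Rightarrow> 'a list \<Rightarrow> bool" where
  "is_cycle V E vs \<longleftrightarrow> distinct vs \<and> length vs \<ge> 3 \<and> set vs \<subseteq> V \<and>
     (\<forall>i < length vs. E (vs ! i) (vs ! ((i + 1) mod length vs)))"

definition girth_ge :: "'a set \<Rightarrow> ('a \<Rightarrow> 'a \<Rightarrow> bool) \<Rightarrow> enat \<Rightarrow> bool" where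
  "girth_ge V E k \<longleftrightarrow> (\<forall>vs. is_cycle V E vs \<longrightarrow> k \<le> enat (length vs))"

definition flag_complex :: "'a set \<Rightarrow> ('a \<Rightarrow> 'a \<Rightarrow> bool) \<Rightarrow> 'a set set" where
  "flag_complex V E = {S. finite S \<and> S \<noteq> {} \<and> S \<subseteq> V \<and>
       (\<forall>x\<in>S. \<forall>y\<in>S. x \<noteq> y \<longrightarrow> E x y)}"

definition cycle_subcomplex :: "'a list \<Rightarrow> 'a set set" where
  "cycle_subcomplex vs =
     {{vs ! i} | i. i < length vs} \<union> {{vs ! i, vs ! ((i + 1) mod length vs)} | i. i < length vs}"

definition full_cycle :: "'a set \<Rightarrow> ('a \<Rightarrow> 'a \<Rightarrow> bool) \<Rightarrow> 'a set set \<Rightarrow> nat \<Rightarrow> bool" where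
  "full_cycle V E C n \<longleftrightarrow> (\<exists>vs. is_cycle V E vs \<and> length vs = n \<and> C = cycle_subcomplex vs \<and>
       (\<forall>S \<in> flag_complex V E. S \<subseteq> set vs \<longrightarrow> S \<in> C))"

definition k_large :: "'a set \<Rightarrow> ('a \<Rightarrow> 'a \<Rightarrow> bool) \<Rightarrow> enat \<Rightarrow> bool" where
  "k_large V E k \<longleftrightarrow> (\<forall>C n. full_cycle V E C n \<longrightarrow> k \<le> enat n)"

definition tV :: "'a set \<Rightarrow> ('a \<Rightarrow> 'a \<Rightarrow> bool) \<Rightarrow> ('a \<times> 'a set) set" where
  "tV V E = {(v, \<sigma>). v \<in> V \<and> (\<sigma> = {v} \<or> (\<exists>w. E v w \<and> \<sigma> = {v, w}))}"

definition tE :: "'a set \<Rightarrow> ('a \<Rightarrow> 'a \<Rightarrow> bool) \<Rightarrow> ('a \<times> 'a set) \<Rightarrow> ('a \<times> 'a set) \<Rightarrow> bool" where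
  "tE V E p q \<longleftrightarrow> p \<in> tV V E \<and> q \<in> tV V E \<and> p \<noteq> q \<and>
     (fst p = fst q \<or>
      (E (fst p) (fst q) \<and> snd p \<in> {{fst p}, {fst p, fst q}} \<and> snd q \<in> {{fst q}, {fst p, fst q}}))"

end

theory Submission
  imports Defs
begin

text \<open>
  A full cycle in the flag complex of a graph is the same as a chordless, triangle-free cycle of
  the graph, so k-largeness says that all such cycles have length at least k.
  A shortest cycle of \<open>\<Gamma>\<close> is chordless, and triangle-free because the girth is at least 4; its
  diagonal lift \<open>v \<mapsto> (v, {v})\<close> is a chordless triangle-free cycle of \<open>\<Gamma>\<close>-tilde of the same
  length. Conversely, a chordless triangle-free cycle of \<open>\<Gamma>\<close>-tilde meets every fibre
  \<open>{(v, \<sigma>)}\<close> in at most two consecutive vertices. Projecting it to \<open>\<Gamma>\<close>, starting at the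
  beginning of a fibre, and collapsing consecutive repetitions gives a cycle of \<open>\<Gamma>\<close> that is no
  longer; it has at least three vertices because two fibres would carry only four vertices,
  three of which span a triangle.
\<close>

section \<open>Cycles as vertex lists\<close>

lemma Suc_mod_less: "i < n \<Longrightarrow> Suc i mod n < (n::nat)"
  by (metis mod_less_divisor not_less0 gr0I)

definition cycle_edges :: "'a list \<Rightarrow> 'a set set" where
  "cycle_edges xs = {{xs ! i, xs ! ((i + 1) mod length xs)} | i. i < length xs}"

lemma cycle_edges_eq_image: "cycle_edges xs = (\<lambda>i. {xs ! i, xs ! (Suc i mod length xs)}) ` {..<length xs}"
  unfolding cycle_edges_def by auto

lemma cycle_subcomplex_eq: "cycle_subcomplex xs = (\<lambda>x. {x}) ` set xs \<union> cycle_edges xs"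
proof -
  have "{{xs ! i} | i. i < length xs} = (\<lambda>x. {x}) ` set xs"
    by (auto simp: in_set_conv_nth image_iff)
  then show ?thesis unfolding cycle_subcomplex_def cycle_edges_def by simp
qed

lemma cycle_edges_map: "cycle_edges (map f xs) = (`) f ` cycle_edges xs"
  unfolding cycle_edges_eq_image image_image by (intro image_cong) (auto simp: Suc_mod_less)

lemma cycle_edges_rotate1: "cycle_edges (rotate1 xs) = cycle_edges xs"
proof -
  let ?n = "length xs" and ?e = "\<lambda>j. {xs ! j, xs ! (Suc j mod length xs)}"
  have succ_onto: "(\<lambda>i. Suc i mod ?n) ` {..<?n} = {..<?n}"
  proof (intro subset_antisym subsetI)
    fix j assume j: "j \<in> {..<?n}"
    then have "j = Suc (if j = 0 then ?n - 1 else j - 1) mod ?n" by auto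
    then show "j \<in> (\<lambda>i. Suc i mod ?n) ` {..<?n}" using j by force
  next
    fix j assume "j \<in> (\<lambda>i. Suc i mod ?n) ` {..<?n}"
    then show "j \<in> {..<?n}" by (auto simp: Suc_mod_less)
  qed
  have "cycle_edges (rotate1 xs) = ?e ` (\<lambda>i. Suc i mod ?n) ` {..<?n}"
    unfolding cycle_edges_eq_image length_rotate1 image_image
  proof (intro image_cong refl)
    fix i assume "i \<in> {..<?n}"
    then show "{rotate1 xs ! i, rotate1 xs ! (Suc i mod ?n)} = ?e (Suc i mod ?n)"
      by (simp add: nth_rotate1 Suc_mod_less)
  qed
  also have "\<dots> = cycle_edges xs"
    unfolding cycle_edges_eq_image succ_onto ..
  finally show ?thesis .
qed

lemma cycle_edges_rotate: "cycle_edges (rotate m xs) = cycle_edges xs"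
  by (induction m) (simp_all add: cycle_edges_rotate1)

lemma doubleton_in_cycle_edges_iff:
  assumes "distinct xs" and "a < b" and "b < length xs"
  shows "{xs ! a, xs ! b} \<in> cycle_edges xs \<longleftrightarrow> b = Suc a \<or> (a = 0 \<and> b = length xs - 1)"
proof
  let ?n = "length xs"
  assume "{xs ! a, xs ! b} \<in> cycle_edges xs"
  then obtain i where i: "i < ?n" and e: "{xs ! a, xs ! b} = {xs ! i, xs ! (Suc i mod ?n)}"
    unfolding cycle_edges_eq_image by blast
  have "(a = i \<and> b = Suc i mod ?n) \<or> (a = Suc i mod ?n \<and> b = i)"
    using e assms i Suc_mod_less[OF i] by (auto simp: doubleton_eq_iff nth_eq_iff_index_eq)
  moreover have "Suc i mod ?n = (if Suc i < ?n then Suc i else 0)"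
    using i by (cases "Suc i = ?n") auto
  ultimately show "b = Suc a \<or> (a = 0 \<and> b = ?n - 1)"
    using assms i by (auto split: if_splits)
next
  assume "b = Suc a \<or> (a = 0 \<and> b = length xs - 1)"
  then show "{xs ! a, xs ! b} \<in> cycle_edges xs"
  proof
    assume "b = Suc a"
    then show ?thesis unfolding cycle_edges_eq_image using assms by force
  next
    assume ends: "a = 0 \<and> b = length xs - 1"
    then have "Suc b = length xs"
      using assms by simp
    then have "Suc b mod length xs = 0"
      by simp
    with ends have "{xs ! a, xs ! b} = {xs ! b, xs ! (Suc b mod length xs)}"
      by auto
    then show ?thesis unfolding cycle_edges_eq_image using assms by blast
  qed
qed

lemma is_cycle_iff_cycle_edges:
  assumes "graph V E"
  shows "is_cycle V E xs \<longleftrightarrow> distinct xs \<and> 3 \<le> length xs \<and> set xs \<subseteq> V \<and>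
    (\<forall>x y. {x, y} \<in> cycle_edges xs \<longrightarrow> E x y)"
proof -
  have sym: "E y x" if "E x y" for x y
    using assms that unfolding graph_def by blast
  have "(\<forall>i < length xs. E (xs ! i) (xs ! ((i + 1) mod length xs))) \<longleftrightarrow>
      (\<forall>x y. {x, y} \<in> cycle_edges xs \<longrightarrow> E x y)"
    unfolding cycle_edges_eq_image by (auto simp: doubleton_eq_iff) (metis sym)
  then show ?thesis unfolding is_cycle_def by blast
qed

lemma is_cycle_rotate:
  assumes "graph V E"
  shows "is_cycle V E (rotate m xs) \<longleftrightarrow> is_cycle V E xs"
  unfolding is_cycle_iff_cycle_edges[OF assms] by (simp add: cycle_edges_rotate)

lemma is_cycle_segment:
  assumes cyc: "is_cycle V E xs" and "Suc a < b" and "b < length xs" and "E (xs ! b) (xs ! a)"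
  shows "is_cycle V E (take (Suc b - a) (drop a xs))"
proof -
  define ys where "ys = take (Suc b - a) (drop a xs)"
  have len: "length ys = Suc b - a" and nth: "\<And>t. t < Suc b - a \<Longrightarrow> ys ! t = xs ! (a + t)"
    using assms unfolding ys_def by auto
  have "E (ys ! t) (ys ! (Suc t mod length ys))" if t: "t < length ys" for t
  proof (cases "Suc t < length ys")
    case True
    then have less: "Suc (a + t) < length xs" using assms len by simp
    have "\<forall>i < length xs. E (xs ! i) (xs ! (Suc i mod length xs))"
      using cyc unfolding is_cycle_def by simp
    from this [rule_format, of "a + t"] have "E (xs ! (a + t)) (xs ! Suc (a + t))"
      using less by simp
    then show ?thesis using True assms len nth t by simp
  next
    case False
    then have "Suc t = length ys" using t by simp
    then have "t = b - a" and "Suc t mod length ys = 0" using len by auto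
    then show ?thesis using assms len nth by simp
  qed
  moreover have "distinct ys" "set ys \<subseteq> V"
    using cyc unfolding ys_def is_cycle_def by (auto dest: in_set_takeD in_set_dropD)
  ultimately show ?thesis unfolding is_cycle_def ys_def [symmetric] using assms len by auto
qed

section \<open>Full cycles of flag complexes\<close>

definition chordless :: "('a \<Rightarrow> 'a \<Rightarrow> bool) \<Rightarrow> 'a list \<Rightarrow> bool" where
  "chordless E xs \<longleftrightarrow> (\<forall>x \<in> set xs. \<forall>y \<in> set xs. E x y \<longrightarrow> {x, y} \<in> cycle_edges xs)"

definition triangle_free :: "('a \<Rightarrow> 'a \<Rightarrow> bool) \<Rightarrow> 'a set \<Rightarrow> bool" where
  "triangle_free E A \<longleftrightarrow> \<not> (\<exists>x \<in> A. \<exists>y \<in> A. \<exists>z \<in> A. E x y \<and> E y z \<and> E z x)"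

lemma chordless_rotate: "chordless E (rotate m xs) \<longleftrightarrow> chordless E xs"
  unfolding chordless_def by (simp add: cycle_edges_rotate)

lemma shortest_cycle_chordless:
  assumes g: "graph V E" and cyc: "is_cycle V E xs"
    and shortest: "\<And>ys. is_cycle V E ys \<Longrightarrow> length xs \<le> length ys"
  shows "chordless E xs"
proof -
  have sym: "E y x" if "E x y" for x y
    using g that unfolding graph_def by blast
  have edge: "{xs ! a, xs ! b} \<in> cycle_edges xs"
    if ab: "a < b" "b < length xs" and e: "E (xs ! b) (xs ! a)" for a b
  proof (rule ccontr)
    assume "{xs ! a, xs ! b} \<notin> cycle_edges xs"
    then have "Suc a < b" and "\<not> (a = 0 \<and> b = length xs - 1)"
      using doubleton_in_cycle_edges_iff[OF _ ab] cyc ab unfolding is_cycle_def by auto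
    then have "length (take (Suc b - a) (drop a xs)) < length xs"
      using ab by auto
    with is_cycle_segment[OF cyc \<open>Suc a < b\<close> ab(2) e] show False
      using shortest by fastforce
  qed
  show ?thesis unfolding chordless_def
  proof (intro ballI impI)
    fix x y assume "x \<in> set xs" "y \<in> set xs" and e: "E x y"
    then obtain a b where ab: "a < length xs" "b < length xs" "x = xs ! a" "y = xs ! b"
      by (auto simp: in_set_conv_nth)
    have "x \<noteq> y" using g e unfolding graph_def by blast
    then have "a < b \<or> b < a" using ab by (cases a b rule: linorder_cases) auto
    then show "{x, y} \<in> cycle_edges xs"
      using edge[of a b] edge[of b a] e sym[OF e] ab by (auto simp: insert_commute)
  qed
qed

lemma is_cycle_triangle:
  assumes "graph V E" and "E x y" "E y z" "E z x"
  shows "is_cycle V E [x, y, z]"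
proof -
  have "x \<noteq> y" "y \<noteq> z" "z \<noteq> x" "x \<in> V" "y \<in> V" "z \<in> V"
    using assms unfolding graph_def by blast+
  moreover have "E ([x, y, z] ! i) ([x, y, z] ! ((i + 1) mod 3))" if "i < 3" for i
  proof -
    have "i = 0 \<or> i = 1 \<or> i = 2" using that by auto
    then show ?thesis using assms by auto
  qed
  ultimately show ?thesis unfolding is_cycle_def by simp
qed

lemma triangle_free_if_girth_ge_4:
  assumes "graph V E" and "girth_ge V E 4"
  shows "triangle_free E V"
  unfolding triangle_free_def
proof clarify
  fix x y z assume "E x y" "E y z" "E z x"
  then have "(4::enat) \<le> enat 3"
    using assms is_cycle_triangle unfolding girth_ge_def by fastforce
  then show False by (simp add: numeral_eq_enat)
qed

lemma length_ge_4_if_triangle_free: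
  assumes "is_cycle V E xs" and "triangle_free E (set xs)"
  shows "4 \<le> length xs"
proof (rule ccontr)
  assume "\<not> 4 \<le> length xs"
  then have len: "length xs = 3" using assms(1) unfolding is_cycle_def by simp
  have step: "E (xs ! i) (xs ! (Suc i mod 3))" if "i < 3" for i
    using assms(1) that len unfolding is_cycle_def by simp
  have "E (xs ! 0) (xs ! 1)" "E (xs ! 1) (xs ! 2)" "E (xs ! 2) (xs ! 0)"
    using step [of 0] step [of 1] step [of 2] by (simp_all add: numeral_2_eq_2)
  moreover have "xs ! 0 \<in> set xs" "xs ! 1 \<in> set xs" "xs ! 2 \<in> set xs"
    using len by auto
  ultimately show False using assms(2) unfolding triangle_free_def by blast
qed

lemma doubleton_in_flag_complex:
  assumes "graph V E" and "E x y"
  shows "{x, y} \<in> flag_complex V E"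
  using assms unfolding graph_def flag_complex_def by blast

lemma triangle_in_flag_complex:
  assumes "graph V E" and "E x y" "E y z" "E z x"
  shows "{x, y, z} \<in> flag_complex V E"
  using assms unfolding graph_def flag_complex_def by blast

lemma card_le_2_if_in_cycle_subcomplex: "S \<in> cycle_subcomplex xs \<Longrightarrow> card S \<le> 2"
  unfolding cycle_subcomplex_eq cycle_edges_eq_image by (auto simp: card_insert_if)

lemma chordless_triangle_free_if_full:
  assumes g: "graph V E"
    and full: "\<forall>S \<in> flag_complex V E. S \<subseteq> set xs \<longrightarrow> S \<in> cycle_subcomplex xs"
  shows "chordless E xs \<and> triangle_free E (set xs)"
proof
  have neq: "x \<noteq> y" if "E x y" for x y
    using g that unfolding graph_def by blast
  show "chordless E xs" unfolding chordless_def
  proof (intro ballI impI)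
    fix x y assume xy: "x \<in> set xs" "y \<in> set xs" "E x y"
    have "{x, y} \<in> cycle_subcomplex xs"
      using full doubleton_in_flag_complex[OF g xy(3)] xy(1,2) by simp
    then show "{x, y} \<in> cycle_edges xs"
      using neq[OF xy(3)] unfolding cycle_subcomplex_eq by (auto simp: doubleton_eq_iff)
  qed
  show "triangle_free E (set xs)" unfolding triangle_free_def
  proof clarify
    fix x y z assume xyz: "x \<in> set xs" "y \<in> set xs" "z \<in> set xs" "E x y" "E y z" "E z x"
    have "{x, y, z} \<in> cycle_subcomplex xs"
      using full triangle_in_flag_complex[OF g xyz(4-6)] xyz(1-3) by simp
    then have "card {x, y, z} \<le> 2" by (rule card_le_2_if_in_cycle_subcomplex)
    moreover have "x \<noteq> y" "y \<noteq> z" "z \<noteq> x"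
      using neq[OF xyz(4)] neq[OF xyz(5)] neq[OF xyz(6)] by auto
    ultimately show False by simp
  qed
qed

lemma full_if_chordless_triangle_free:
  assumes "chordless E xs" and "triangle_free E (set xs)"
    and S: "S \<in> flag_complex V E" "S \<subseteq> set xs"
  shows "S \<in> cycle_subcomplex xs"
proof -
  obtain x where x: "x \<in> S" and clique: "\<And>y z. y \<in> S \<Longrightarrow> z \<in> S \<Longrightarrow> y \<noteq> z \<Longrightarrow> E y z"
    using S(1) unfolding flag_complex_def by blast
  show ?thesis
  proof (cases "S = {x}")
    case True
    then show ?thesis using x S(2) unfolding cycle_subcomplex_eq by blast
  next
    case False
    then obtain y where y: "y \<in> S" "y \<noteq> x" using x by blast
    have "S = {x, y}"
    proof (rule ccontr)
      assume "S \<noteq> {x, y}"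
      then obtain z where "z \<in> S" "z \<noteq> x" "z \<noteq> y" using x y by blast
      then show False
        using assms(2) x y clique S(2) unfolding triangle_free_def by blast
    qed
    moreover have "{x, y} \<in> cycle_edges xs"
      using assms(1) x y clique S(2) unfolding chordless_def by blast
    ultimately show ?thesis unfolding cycle_subcomplex_eq by blast
  qed
qed

lemma k_large_iff:
  assumes "graph V E"
  shows "k_large V E k \<longleftrightarrow>
    (\<forall>xs. is_cycle V E xs \<and> chordless E xs \<and> triangle_free E (set xs) \<longrightarrow> k \<le> enat (length xs))"
proof -
  have "(\<forall>S \<in> flag_complex V E. S \<subseteq> set xs \<longrightarrow> S \<in> cycle_subcomplex xs) \<longleftrightarrow>
      chordless E xs \<and> triangle_free E (set xs)" for xs
    using chordless_triangle_free_if_full[OF assms] full_if_chordless_triangle_free by blast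
  then have full_cycle_eq: "full_cycle V E C n \<longleftrightarrow> (\<exists>xs. is_cycle V E xs \<and> length xs = n \<and>
      C = cycle_subcomplex xs \<and> chordless E xs \<and> triangle_free E (set xs))" for C n
    unfolding full_cycle_def by fastforce
  show ?thesis unfolding k_large_def
  proof (intro iffI allI impI)
    fix xs assume "\<forall>C n. full_cycle V E C n \<longrightarrow> k \<le> enat n"
      and "is_cycle V E xs \<and> chordless E xs \<and> triangle_free E (set xs)"
    then show "k \<le> enat (length xs)" using full_cycle_eq by blast
  next
    fix C n assume all: "\<forall>xs. is_cycle V E xs \<and> chordless E xs \<and> triangle_free E (set xs) \<longrightarrow>
        k \<le> enat (length xs)" and "full_cycle V E C n"
    then obtain xs where "is_cycle V E xs \<and> chordless E xs \<and> triangle_free E (set xs)"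
      and "length xs = n"
      unfolding full_cycle_eq by blast
    with all show "k \<le> enat n" by blast
  qed
qed

lemma cycle_map_embedding:
  assumes inj: "inj_on f V" and adj: "\<And>x y. x \<in> V \<Longrightarrow> y \<in> V \<Longrightarrow> E' (f x) (f y) \<longleftrightarrow> E x y"
    and into: "f ` V \<subseteq> V'"
    and cyc: "is_cycle V E xs" and "chordless E xs" and "triangle_free E (set xs)"
  shows "is_cycle V' E' (map f xs) \<and> chordless E' (map f xs) \<and> triangle_free E' (set (map f xs))"
proof (intro conjI)
  have V: "set xs \<subseteq> V" using cyc unfolding is_cycle_def by blast
  have "E' (map f xs ! i) (map f xs ! (Suc i mod length xs))" if "i < length xs" for i
    using cyc that V adj Suc_mod_less[OF that] unfolding is_cycle_def by (simp add: subset_iff)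
  then show "is_cycle V' E' (map f xs)"
    using cyc V into inj_on_subset[OF inj V] unfolding is_cycle_def by (auto simp: distinct_map)
  have E: "E x y" if "x \<in> set xs" "y \<in> set xs" "E' (f x) (f y)" for x y
    using that V adj[of x y] by blast
  show "chordless E' (map f xs)" unfolding chordless_def
  proof clarsimp
    fix x y assume "x \<in> set xs" "y \<in> set xs" "E' (f x) (f y)"
    then have "{x, y} \<in> cycle_edges xs"
      using \<open>chordless E xs\<close> E unfolding chordless_def by blast
    from imageI[OF this, of "(`) f"] show "{f x, f y} \<in> cycle_edges (map f xs)"
      unfolding cycle_edges_map by simp
  qed
  show "triangle_free E' (set (map f xs))" unfolding triangle_free_def
  proof clarsimp
    fix x y z assume "x \<in> set xs" "y \<in> set xs" "z \<in> set xs"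
      and "E' (f x) (f y)" "E' (f y) (f z)" "E' (f z) (f x)"
    then have "E x y" "E y z" "E z x" using E by blast+
    then show False
      using \<open>triangle_free E (set xs)\<close> \<open>x \<in> set xs\<close> \<open>y \<in> set xs\<close> \<open>z \<in> set xs\<close>
      unfolding triangle_free_def by blast
  qed
qed

section \<open>Collapsing repeated consecutive vertices\<close>

definition repeats_adjacent :: "'a list \<Rightarrow> bool" where
  "repeats_adjacent xs \<longleftrightarrow> (\<forall>i j. i < j \<and> j < length xs \<and> xs ! i = xs ! j \<longrightarrow> j = Suc i)"

lemma repeats_adjacent_ConsD: "repeats_adjacent (x # xs) \<Longrightarrow> repeats_adjacent xs"
  unfolding repeats_adjacent_def
proof clarify
  fix i j assume "\<forall>i j. i < j \<and> j < length (x # xs) \<and> (x # xs) ! i = (x # xs) ! j \<longrightarrow> j = Suc i"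
    and "i < j" "j < length xs" "xs ! i = xs ! j"
  then show "j = Suc i" by (metis Suc_less_eq length_Cons nat.inject nth_Cons_Suc)
qed

lemma distinct_remdups_adj_if_repeats_adjacent:
  "repeats_adjacent xs \<Longrightarrow> distinct (remdups_adj xs)"
proof (induction xs rule: remdups_adj.induct)
  case (3 x y xs)
  have rep: "repeats_adjacent (y # xs)"
    using "3.prems" by (rule repeats_adjacent_ConsD)
  show ?case
  proof (cases "x = y")
    case True
    then show ?thesis using "3.IH"(1) rep by simp
  next
    case False
    have "x \<notin> set (y # xs)"
    proof
      assume "x \<in> set (y # xs)"
      then obtain t where t: "t < length (y # xs)" "(y # xs) ! t = x"
        unfolding in_set_conv_nth by blast
      then have "(x # y # xs) ! 0 = (x # y # xs) ! Suc t" "Suc t < length (x # y # xs)" by auto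
      then have "t = 0" using "3.prems" unfolding repeats_adjacent_def by blast
      then show False using t False by simp
    qed
    then show ?thesis using "3.IH"(2)[OF False rep] False by simp
  qed
qed simp_all

lemma is_cycle_remdups_adj:
  assumes rep: "repeats_adjacent ws" and succ: "successively (\<lambda>x y. x = y \<or> E x y) ws"
    and wrap: "E (last ws) (hd ws)" and card: "3 \<le> card (set ws)" and V: "set ws \<subseteq> V"
  shows "is_cycle V E (remdups_adj ws)"
proof -
  define ys where "ys = remdups_adj ws"
  have dist: "distinct ys" unfolding ys_def using rep by (rule distinct_remdups_adj_if_repeats_adjacent)
  have set: "set ys = set ws" unfolding ys_def by simp
  have len: "3 \<le> length ys" using card distinct_card[OF dist] set by simp
  have "E (ys ! i) (ys ! (Suc i mod length ys))" if i: "i < length ys" for i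
  proof (cases "Suc i < length ys")
    case True
    have "successively (\<lambda>x y. x = y \<or> E x y) ys"
      unfolding ys_def by (rule successively_remdups_adjI[OF succ])
    from successively_nth[OF this True] have "ys ! i = ys ! Suc i \<or> E (ys ! i) (ys ! Suc i)"
      by simp
    moreover have "ys ! i \<noteq> ys ! Suc i"
      using remdups_adj_adjacent True unfolding ys_def by blast
    ultimately show ?thesis using True by simp
  next
    case False
    then have "Suc i = length ys" using i by simp
    then have "i = length ys - 1" "Suc i mod length ys = 0" by auto
    moreover have "ys \<noteq> []" using len by auto
    then have "ys ! (length ys - 1) = last ys" "ys ! 0 = hd ys"
      by (simp_all add: last_conv_nth hd_conv_nth)
    ultimately show ?thesis using wrap unfolding ys_def by simp
  qed
  then show ?thesis unfolding is_cycle_def ys_def [symmetric] using dist len set V by simp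
qed

lemma ex_rotate_hd_last_neq:
  assumes "x \<in> set xs" "y \<in> set xs" "f x \<noteq> f y"
  shows "\<exists>m. f (hd (rotate m xs)) \<noteq> f (last (rotate m xs))"
proof (rule ccontr)
  assume "\<not> ?thesis"
  then have same: "f (hd (rotate m xs)) = f (last (rotate m xs))" for m by blast
  have ne: "xs \<noteq> []" using assms by auto
  have hd: "f (hd (rotate m xs)) = f (hd xs)" for m
  proof (induction m)
    case (Suc m)
    have "last (rotate (Suc m) xs) = hd (rotate m xs)"
      using ne by (simp add: rotate1_hd_tl)
    then show ?case using same [of "Suc m"] Suc by simp
  qed simp
  have "f z = f (hd xs)" if "z \<in> set xs" for z
  proof -
    from that obtain j where "j < length xs" "z = xs ! j" unfolding in_set_conv_nth by blast
    then show ?thesis using hd [of j] ne by (simp add: hd_rotate_conv_nth)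
  qed
  then show False using assms by metis
qed

lemma two_valued_repeats_adjacent:
  assumes rep: "repeats_adjacent ws" and card: "card (set ws) \<le> 2"
    and len: "4 \<le> length ws" and ends: "hd ws \<noteq> last ws"
  shows "\<exists>a b. a \<noteq> b \<and> ws = [a, a, b, b]"
proof -
  define n where "n = length ws"
  have rep': "j = Suc i" if "i < j" "j < n" "ws ! i = ws ! j" for i j
    using rep that unfolding repeats_adjacent_def n_def by blast
  have ne: "ws \<noteq> []" and idx: "0 < n" "1 < n" "2 < n" "3 < n" using len n_def by auto
  have "ws ! 0 \<noteq> ws ! 2" using rep'[of 0 2] len n_def by auto
  moreover have "{ws ! 0, ws ! 2} \<subseteq> set ws" using idx n_def by auto
  ultimately have set: "set ws = {ws ! 0, ws ! 2}"
    using card by (intro card_seteq [symmetric]) auto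
  have "ws ! (n - 1) \<noteq> ws ! 0"
    using ends ne unfolding n_def by (simp add: hd_conv_nth last_conv_nth)
  moreover have "ws ! (n - 1) \<in> set ws" using len n_def by simp
  ultimately have "ws ! (n - 1) = ws ! 2" using set by blast
  then have "\<not> 2 < n - 1 \<or> n - 1 = 3" using rep'[of 2 "n - 1"] idx by auto
  then have n: "n = 4" using len n_def by linarith
  have "ws ! 1 \<in> set ws" using idx n_def by simp
  then have "ws ! 1 \<in> {ws ! 0, ws ! 2}" using set by blast
  moreover have "ws ! 1 \<noteq> ws ! 3" using rep'[of 1 3] n by auto
  ultimately have "ws ! 1 = ws ! 0" using \<open>ws ! (n - 1) = ws ! 2\<close> n by auto
  moreover have "ws = [ws ! 0, ws ! 1, ws ! 2, ws ! 3]"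
    using n unfolding n_def by (intro nth_equalityI) (auto simp: less_Suc_eq numeral_eq_Suc)
  ultimately show ?thesis using \<open>ws ! 0 \<noteq> ws ! 2\<close> \<open>ws ! (n - 1) = ws ! 2\<close> n by force
qed

section \<open>The graph \<open>\<Gamma>\<close>-tilde\<close>

lemma graph_tilde: "graph V E \<Longrightarrow> graph (tV V E) (tE V E)"
  unfolding graph_def tE_def by (auto simp: insert_commute)

lemma tE_diag_iff: "graph V E \<Longrightarrow> tE V E (u, {u}) (v, {v}) \<longleftrightarrow> E u v"
  unfolding graph_def tE_def tV_def by auto

lemma tE_if_fst_eq: "p \<in> tV V E \<Longrightarrow> q \<in> tV V E \<Longrightarrow> p \<noteq> q \<Longrightarrow> fst p = fst q \<Longrightarrow> tE V E p q"
  unfolding tE_def by auto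

lemma E_fst_if_tE: "tE V E p q \<Longrightarrow> fst p \<noteq> fst q \<Longrightarrow> E (fst p) (fst q)"
  unfolding tE_def by auto

lemma fst_in_V_if_in_tV: "p \<in> tV V E \<Longrightarrow> fst p \<in> V"
  unfolding tV_def by auto

lemma tilde_triangle:
  assumes g: "graph V E" and bc: "tE V E b c" and da: "tE V E d a"
    and ab: "a \<in> tV V E" "b \<in> tV V E" "a \<noteq> b"
    and fst: "fst a = fst b" "fst c = fst d" "fst a \<noteq> fst c"
  shows "tE V E a b \<and> tE V E b c \<and> tE V E c a"
proof -
  have "E (fst c) (fst a)" "snd c \<in> {{fst c}, {fst a, fst c}}" "c \<in> tV V E"
    using bc fst g unfolding tE_def graph_def by auto
  moreover have "snd a \<in> {{fst a}, {fst c, fst a}}"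
    using da fst unfolding tE_def by auto
  ultimately have "tE V E c a"
    using ab fst unfolding tE_def by (auto simp: insert_commute)
  then show ?thesis using tE_if_fst_eq[OF ab] fst bc by blast
qed

lemma girth_ge_if_k_large_tilde:
  assumes g: "graph V E" and g4: "girth_ge V E 4" and large: "k_large (tV V E) (tE V E) k"
  shows "girth_ge V E k"
  unfolding girth_ge_def
proof clarify
  fix xs assume "is_cycle V E xs"
  then obtain cs where cyc: "is_cycle V E cs"
    and shortest: "\<forall>ys. is_cycle V E ys \<longrightarrow> length cs \<le> length ys"
    using ex_has_least_nat[where m = length] by blast
  have free: "triangle_free E (set cs)"
    using triangle_free_if_girth_ge_4[OF g g4] cyc unfolding triangle_free_def is_cycle_def by blast
  have chordless: "chordless E cs"
    using shortest_cycle_chordless[OF g cyc] shortest by blast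
  define diag :: "'a \<Rightarrow> 'a \<times> 'a set" where "diag u = (u, {u})" for u
  have inj: "inj_on diag V" and into: "diag ` V \<subseteq> tV V E"
    unfolding inj_on_def tV_def diag_def by auto
  have adj: "tE V E (diag u) (diag v) \<longleftrightarrow> E u v" if "u \<in> V" "v \<in> V" for u v
    unfolding diag_def using tE_diag_iff[OF g] .
  note cycle_map_embedding[OF inj adj into cyc chordless free]
  then have "k \<le> enat (length cs)"
    using large unfolding k_large_iff[OF graph_tilde[OF g]] by fastforce
  then show "k \<le> enat (length xs)"
    using shortest \<open>is_cycle V E xs\<close> by (meson enat_ord_simps(1) order_trans)
qed

lemma fst_not_constant_tilde:
  assumes cyc: "is_cycle (tV V E) (tE V E) vs" and free: "triangle_free (tE V E) (set vs)"
  shows "\<exists>x \<in> set vs. \<exists>y \<in> set vs. fst x \<noteq> fst y"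
proof (rule ccontr)
  assume "\<not> ?thesis"
  then have same: "fst (vs ! i) = fst (vs ! j)" if "i < length vs" "j < length vs" for i j
    using that by (metis nth_mem)
  have "3 \<le> length vs" "distinct vs" "set vs \<subseteq> tV V E"
    using cyc unfolding is_cycle_def by auto
  then have adj: "tE V E (vs ! i) (vs ! j)" if "i < 3" "j < 3" "i \<noteq> j" for i j
    using that same[of i j] by (intro tE_if_fst_eq) (auto simp: nth_eq_iff_index_eq)
  have "vs ! 0 \<in> set vs" "vs ! 1 \<in> set vs" "vs ! 2 \<in> set vs"
    using \<open>3 \<le> length vs\<close> by (auto intro: nth_mem)
  moreover have "tE V E (vs ! 0) (vs ! 1)" "tE V E (vs ! 1) (vs ! 2)" "tE V E (vs ! 2) (vs ! 0)"
    by (rule adj; simp)+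
  ultimately show False
    using free unfolding triangle_free_def by blast
qed

lemma repeats_adjacent_map_fst_tilde:
  assumes cyc: "is_cycle (tV V E) (tE V E) vs" and chordless: "chordless (tE V E) vs"
    and ends: "fst (hd vs) \<noteq> fst (last vs)"
  shows "repeats_adjacent (map fst vs)"
  unfolding repeats_adjacent_def
proof clarify
  fix i j assume ij: "i < j" "j < length (map fst vs)" "map fst vs ! i = map fst vs ! j"
  have dist: "distinct vs" and in_tV: "set vs \<subseteq> tV V E" and ne: "vs \<noteq> []"
    using cyc unfolding is_cycle_def by auto
  have "vs ! i \<noteq> vs ! j" using dist ij by (simp add: nth_eq_iff_index_eq)
  moreover have "vs ! i \<in> set vs" "vs ! j \<in> set vs" using ij by auto
  ultimately have "tE V E (vs ! i) (vs ! j)"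
    using tE_if_fst_eq in_tV ij by (metis length_map nth_map order.strict_trans subsetD)
  with \<open>vs ! i \<in> set vs\<close> \<open>vs ! j \<in> set vs\<close> have "{vs ! i, vs ! j} \<in> cycle_edges vs"
    using chordless unfolding chordless_def by blast
  then have "j = Suc i \<or> (i = 0 \<and> j = length vs - 1)"
    using doubleton_in_cycle_edges_iff[OF dist ij(1)] ij by simp
  moreover have "\<not> (i = 0 \<and> j = length vs - 1)"
    using ends ne ij by (auto simp: hd_conv_nth last_conv_nth)
  ultimately show "j = Suc i" by blast
qed

lemma three_le_card_fst_tilde:
  assumes g: "graph V E" and cyc: "is_cycle (tV V E) (tE V E) vs"
    and free: "triangle_free (tE V E) (set vs)"
    and rep: "repeats_adjacent (map fst vs)" and ends: "fst (hd vs) \<noteq> fst (last vs)"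
  shows "3 \<le> card (fst ` set vs)"
proof (rule ccontr)
  assume "\<not> 3 \<le> card (fst ` set vs)"
  moreover have n4: "4 \<le> length vs" using length_ge_4_if_triangle_free[OF cyc free] .
  moreover have "vs \<noteq> []" using n4 by auto
  then have "hd (map fst vs) \<noteq> last (map fst vs)"
    using ends by (simp add: hd_map last_map)
  ultimately obtain u w where "u \<noteq> w" and ws: "map fst vs = [u, u, w, w]"
    using two_valued_repeats_adjacent[OF rep] by force
  then have n: "length vs = 4" using length_map[of fst vs] by simp
  have "fst (vs ! i) = [u, u, w, w] ! i" if "i < 4" for i
    using nth_map[of i vs fst] ws n that by simp
  then have fst: "fst (vs ! 0) = u" "fst (vs ! 1) = u" "fst (vs ! 2) = w" "fst (vs ! 3) = w"
    by (simp_all add: numeral_2_eq_2 numeral_3_eq_3)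
  have step: "tE V E (vs ! i) (vs ! (Suc i mod 4))" if "i < 4" for i
    using cyc that n unfolding is_cycle_def by simp
  have neq: "vs ! 0 \<noteq> vs ! 1" using cyc n unfolding is_cycle_def by (simp add: nth_eq_iff_index_eq)
  have "vs ! 0 \<in> set vs" "vs ! 1 \<in> set vs" "vs ! 2 \<in> set vs" using n by auto
  moreover have "set vs \<subseteq> tV V E" using cyc unfolding is_cycle_def by blast
  ultimately have "vs ! 0 \<in> tV V E" "vs ! 1 \<in> tV V E" by blast+
  moreover have "tE V E (vs ! 1) (vs ! 2)" "tE V E (vs ! 3) (vs ! 0)"
    using step[of 1] step[of 3] by (simp_all add: numeral_2_eq_2)
  ultimately have "tE V E (vs ! 0) (vs ! 1) \<and> tE V E (vs ! 1) (vs ! 2) \<and> tE V E (vs ! 2) (vs ! 0)"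
    by (intro tilde_triangle[OF g _ _ _ _ neq]) (use fst \<open>u \<noteq> w\<close> in auto)
  with \<open>vs ! 0 \<in> set vs\<close> \<open>vs ! 1 \<in> set vs\<close> \<open>vs ! 2 \<in> set vs\<close> show False
    using free unfolding triangle_free_def by blast
qed

lemma is_cycle_projection_tilde:
  assumes g: "graph V E" and cyc: "is_cycle (tV V E) (tE V E) vs"
    and chordless: "chordless (tE V E) vs" and free: "triangle_free (tE V E) (set vs)"
    and ends: "fst (hd vs) \<noteq> fst (last vs)"
  shows "is_cycle V E (remdups_adj (map fst vs))"
proof (rule is_cycle_remdups_adj)
  \<comment> \<open>Since \<open>vs\<close> starts at the beginning of a fibre, every fibre is a contiguous block.\<close>
  show rep: "repeats_adjacent (map fst vs)"
    using repeats_adjacent_map_fst_tilde[OF cyc chordless ends] .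
  show "3 \<le> card (set (map fst vs))"
    using three_le_card_fst_tilde[OF g cyc free rep ends] by simp
  have step: "tE V E (vs ! i) (vs ! (Suc i mod length vs))" if "i < length vs" for i
    using cyc that unfolding is_cycle_def by simp
  show "successively (\<lambda>x y. x = y \<or> E x y) (map fst vs)" unfolding successively_conv_nth
  proof (intro allI impI)
    fix i assume "Suc i < length (map fst vs)"
    then have "tE V E (vs ! i) (vs ! Suc i)" using step[of i] by simp
    then show "map fst vs ! i = map fst vs ! Suc i \<or> E (map fst vs ! i) (map fst vs ! Suc i)"
      using E_fst_if_tE \<open>Suc i < length (map fst vs)\<close> by fastforce
  qed
  have "vs \<noteq> []" using cyc unfolding is_cycle_def by auto
  then have "tE V E (last vs) (hd vs)"
    using step[of "length vs - 1"] by (simp add: hd_conv_nth last_conv_nth)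
  with ends have "E (fst (last vs)) (fst (hd vs))"
    by (metis E_fst_if_tE)
  then show "E (last (map fst vs)) (hd (map fst vs))"
    using \<open>vs \<noteq> []\<close> by (simp add: hd_map last_map)
  show "set (map fst vs) \<subseteq> V"
    using cyc fst_in_V_if_in_tV[of _ V E] unfolding is_cycle_def by auto
qed

lemma k_large_tilde_if_girth_ge:
  assumes g: "graph V E" and girth: "girth_ge V E k"
  shows "k_large (tV V E) (tE V E) k"
  unfolding k_large_iff[OF graph_tilde[OF g]]
proof clarify
  fix vs assume cyc: "is_cycle (tV V E) (tE V E) vs"
    and chordless: "chordless (tE V E) vs" and free: "triangle_free (tE V E) (set vs)"
  have "\<exists>x \<in> set vs. \<exists>y \<in> set vs. fst x \<noteq> fst y"
    by (rule fst_not_constant_tilde[OF cyc free])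
  then obtain m where "fst (hd (rotate m vs)) \<noteq> fst (last (rotate m vs))"
    using ex_rotate_hd_last_neq by metis
  moreover have "is_cycle (tV V E) (tE V E) (rotate m vs)"
    using cyc is_cycle_rotate[OF graph_tilde[OF g]] by blast
  moreover have "chordless (tE V E) (rotate m vs)" "triangle_free (tE V E) (set (rotate m vs))"
    using chordless free by (simp_all add: chordless_rotate)
  ultimately have "is_cycle V E (remdups_adj (map fst (rotate m vs)))"
    using is_cycle_projection_tilde[OF g] by blast
  then have "k \<le> enat (length (remdups_adj (map fst (rotate m vs))))"
    using girth unfolding girth_ge_def by blast
  also have "\<dots> \<le> enat (length vs)"
    using remdups_adj_length[of "map fst (rotate m vs)"] by simp
  finally show "k \<le> enat (length vs)" .
qed

theorem lemma2p9:
  fixes V :: "'a set" and E :: "'a \<Rightarrow> 'a \<Rightarrow> bool" and k :: enat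
  assumes "graph V E"
    and "4 \<le> k"
    and "girth_ge V E 4"
  shows "k_large (tV V E) (tE V E) k \<longleftrightarrow> girth_ge V E k"
  using girth_ge_if_k_large_tilde[OF assms(1,3)] k_large_tilde_if_girth_ge[OF assms(1)] by blast

end
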